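(* Let $\mathbb{K}$ be a field, $X$ a set and $\alpha=(\{D_t\}_{t\in G},\{\alpha_t\}_{t\in G})$ a partial action of a group $G$ on the algebra $\mathcal{F}_0(X)$. Then there exists a partial action $\theta=(\{X_t\}_{t\in G},\{h_t\}_{t\in G})$ of $G$ on $X$ such that $D_t=\mathcal{F}_0(X_t)$ and $\alpha_t(f)=f\circ h_{t^{-1}}$ for all $t\in G$ and $f\in D_{t^{-1}}$ (i.e. $\alpha$ arises from $\theta$).
   Context: $\mathcal{F}_0(X)$ is the $\mathbb{K}$-algebra of finitely supported functions $X\to\mathbb{K}$ with pointwise operations, and for $A\subseteq X$, $\mathcal{F}_0(A)=\{f\in\mathcal{F}_0(X):f(x)=0\ \forall x\notin A\}$. A partial action of $G$ on a set $X$ is a pair $(\{X_t\},\{h_t\})$ with $X_t\subseteq X$, bijections $h_t:X_{t^{-1}}\to X_t$, $X_e=X$, $h_e=\mathrm{id}$, $h_t(X_{t^{-1}}\cap X_s)=X_t\cap X_{ts}$, $h_t(h_s(x))=h_{ts}(x)$ for $x\in X_{s^{-1}}\cap X_{s^{-1}t^{-1}}$. A partial action of $G$ on an algebra $A$ is a pair $(\{D_t\},\{\alpha_t\})$ with $D_t$ two-sided ideals, $\alpha_t:D_{t^{-1}}\to D_t$ algebra isomorphisms, $D_e=A$, $\alpha_e=\mathrm{id}$, $\alpha_t(D_{t^{-1}}\cap D_s)=D_t\cap D_{ts}$, $\alpha_t\alpha_s=\alpha_{ts}$ on $D_{s^{-1}}\cap D_{s^{-1}t^{-1}}$. *)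

theory Defs
  imports "HOL-Algebra.Group"
begin

text \<open>F_0(X): finitely supported functions X -> K, represented as functions on the
ambient type vanishing outside X.\<close>
definition F0 :: "'x set \<Rightarrow> ('x \<Rightarrow> 'k::field) set" where
  "F0 X = {f. finite {x. f x \<noteq> 0} \<and> (\<forall>x. x \<notin> X \<longrightarrow> f x = 0)}"

text \<open>For A \<subseteq> X this is F_0(A) = {f \<in> F_0(X). f vanishes outside A}.\<close>

definition alg_ideal :: "'x set \<Rightarrow> ('x \<Rightarrow> 'k::field) set \<Rightarrow> bool" where
  "alg_ideal X I \<longleftrightarrow> I \<subseteq> F0 X \<and> (\<lambda>x. 0) \<in> I
     \<and> (\<forall>f\<in>I. \<forall>g\<in>I. (\<lambda>x. f x + g x) \<in> I)
     \<and> (\<forall>c. \<forall>f\<in>I. (\<lambda>x. c * f x) \<in> I)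
     \<and> (\<forall>a\<in>F0 X. \<forall>f\<in>I. (\<lambda>x. a x * f x) \<in> I \<and> (\<lambda>x. f x * a x) \<in> I)"

definition alg_iso :: "(('x \<Rightarrow> 'k::field) \<Rightarrow> ('x \<Rightarrow> 'k)) \<Rightarrow> ('x \<Rightarrow> 'k) set \<Rightarrow> ('x \<Rightarrow> 'k) set \<Rightarrow> bool" where
  "alg_iso \<phi> I J \<longleftrightarrow> bij_betw \<phi> I J
     \<and> (\<forall>f\<in>I. \<forall>g\<in>I. \<phi> (\<lambda>x. f x + g x) = (\<lambda>x. \<phi> f x + \<phi> g x))
     \<and> (\<forall>f\<in>I. \<forall>g\<in>I. \<phi> (\<lambda>x. f x * g x) = (\<lambda>x. \<phi> f x * \<phi> g x))
     \<and> (\<forall>c. \<forall>f\<in>I. \<phi> (\<lambda>x. c * f x) = (\<lambda>x. c * \<phi> f x))"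

definition partial_action_alg ::
  "('g, 'm) monoid_scheme \<Rightarrow> 'x set \<Rightarrow> ('g \<Rightarrow> ('x \<Rightarrow> 'k::field) set)
     \<Rightarrow> ('g \<Rightarrow> ('x \<Rightarrow> 'k) \<Rightarrow> ('x \<Rightarrow> 'k)) \<Rightarrow> bool" where
  "partial_action_alg G X D \<alpha> \<longleftrightarrow>
     (\<forall>t\<in>carrier G. alg_ideal X (D t))
   \<and> (\<forall>t\<in>carrier G. alg_iso (\<alpha> t) (D (inv\<^bsub>G\<^esub> t)) (D t))
   \<and> D \<one>\<^bsub>G\<^esub> = F0 X
   \<and> (\<forall>f\<in>F0 X. \<alpha> \<one>\<^bsub>G\<^esub> f = f)
   \<and> (\<forall>t\<in>carrier G. \<forall>s\<in>carrier G.
        \<alpha> t ` (D (inv\<^bsub>G\<^esub> t) \<inter> D s) = D t \<inter> D (t \<otimes>\<^bsub>G\<^esub> s))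
   \<and> (\<forall>t\<in>carrier G. \<forall>s\<in>carrier G.
        \<forall>f\<in>D (inv\<^bsub>G\<^esub> s) \<inter> D (inv\<^bsub>G\<^esub> s \<otimes>\<^bsub>G\<^esub> inv\<^bsub>G\<^esub> t).
          \<alpha> t (\<alpha> s f) = \<alpha> (t \<otimes>\<^bsub>G\<^esub> s) f)"

definition partial_action_set ::
  "('g, 'm) monoid_scheme \<Rightarrow> 'x set \<Rightarrow> ('g \<Rightarrow> 'x set) \<Rightarrow> ('g \<Rightarrow> 'x \<Rightarrow> 'x) \<Rightarrow> bool" where
  "partial_action_set G X Xs h \<longleftrightarrow>
     (\<forall>t\<in>carrier G. Xs t \<subseteq> X)
   \<and> (\<forall>t\<in>carrier G. bij_betw (h t) (Xs (inv\<^bsub>G\<^esub> t)) (Xs t))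
   \<and> Xs \<one>\<^bsub>G\<^esub> = X
   \<and> (\<forall>x\<in>X. h \<one>\<^bsub>G\<^esub> x = x)
   \<and> (\<forall>t\<in>carrier G. \<forall>s\<in>carrier G.
        h t ` (Xs (inv\<^bsub>G\<^esub> t) \<inter> Xs s) = Xs t \<inter> Xs (t \<otimes>\<^bsub>G\<^esub> s))
   \<and> (\<forall>t\<in>carrier G. \<forall>s\<in>carrier G.
        \<forall>x\<in>Xs (inv\<^bsub>G\<^esub> s) \<inter> Xs (inv\<^bsub>G\<^esub> s \<otimes>\<^bsub>G\<^esub> inv\<^bsub>G\<^esub> t).
          h t (h s x) = h (t \<otimes>\<^bsub>G\<^esub> s) x)"

end

theory Submission
  imports Defs
begin

text \<open>
  Every ideal of \<open>F\<^sub>0(X)\<close> is \<open>F\<^sub>0(A)\<close> for the set \<open>A\<close> of points whose point mass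
  \<open>\<delta>\<^sub>x\<close> it contains, since a finitely supported function is a finite combination of
  point masses. An algebra isomorphism between two such ideals sends each \<open>\<delta>\<^sub>x\<close> to a
  nonzero idempotent \<open>e\<close>, and the multiplicativity forces \<open>e\<close> to be a single point mass
  \<open>\<delta>\<^sub>y\<close>. Setting \<open>X\<^sub>t = {x. \<delta>\<^sub>x \<in> D\<^sub>t}\<close> and \<open>h\<^sub>t x = y\<close> when \<open>\<alpha>\<^sub>t \<delta>\<^sub>x = \<delta>\<^sub>y\<close>, every axiom
  of a partial action on \<open>X\<close> is the corresponding axiom for \<open>\<alpha>\<close> evaluated on point masses.
\<close>

definition delta :: "'x \<Rightarrow> 'x \<Rightarrow> 'k::field" where
  "delta a = (\<lambda>z. if z = a then 1 else 0)"

lemma delta_inject: "delta a = (delta b :: 'x \<Rightarrow> 'k::field) \<longleftrightarrow> a = b"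
  unfolding delta_def by (metis one_neq_zero)

lemma delta_in_F0: "a \<in> X \<Longrightarrow> (delta a :: 'x \<Rightarrow> 'k::field) \<in> F0 X"
proof -
  assume "a \<in> X"
  have "{x. (delta a :: 'x \<Rightarrow> 'k) x \<noteq> 0} = {a}" by (auto simp: delta_def)
  with \<open>a \<in> X\<close> show ?thesis unfolding F0_def by (auto simp: delta_def)
qed

lemma mult_delta: "(\<lambda>z. f z * delta x z) = (\<lambda>z. f x * (delta x z :: 'k::field))"
  by (auto simp: delta_def)

lemma delta_idem: "(\<lambda>z. delta x z * delta x z) = (delta x :: 'x \<Rightarrow> 'k::field)"
  by (auto simp: delta_def)

lemma alg_ideal_subset_F0: "alg_ideal X I \<Longrightarrow> I \<subseteq> F0 X"
  by (simp add: alg_ideal_def)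

lemma alg_ideal_zero: "alg_ideal X I \<Longrightarrow> (\<lambda>x. 0) \<in> I"
  by (simp add: alg_ideal_def)

lemma alg_ideal_add: "alg_ideal X I \<Longrightarrow> f \<in> I \<Longrightarrow> g \<in> I \<Longrightarrow> (\<lambda>x. f x + g x) \<in> I"
  by (simp add: alg_ideal_def)

lemma alg_ideal_smult: "alg_ideal X I \<Longrightarrow> f \<in> I \<Longrightarrow> (\<lambda>x. c * f x) \<in> I"
  by (simp add: alg_ideal_def)

lemma alg_ideal_mult: "alg_ideal X I \<Longrightarrow> a \<in> F0 X \<Longrightarrow> f \<in> I \<Longrightarrow> (\<lambda>x. f x * a x) \<in> I"
  by (simp add: alg_ideal_def)

lemma alg_ideal_delta_mem:
  assumes I: "alg_ideal X I" and f: "f \<in> I" and fx: "f x \<noteq> (0::'k::field)"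
  shows "x \<in> X" and "delta x \<in> I"
proof -
  have "f \<in> F0 X" using alg_ideal_subset_F0[OF I] f by blast
  with fx show xX: "x \<in> X" unfolding F0_def by auto
  have "(\<lambda>z. inverse (f x) * (f z * delta x z)) \<in> I"
    by (intro alg_ideal_smult[OF I] alg_ideal_mult[OF I delta_in_F0[OF xX] f])
  moreover have "(\<lambda>z. inverse (f x) * (f z * delta x z)) = delta x"
    using fx by (auto simp: delta_def)
  ultimately show "delta x \<in> I" by simp
qed

lemma alg_ideal_delta_point_mem:
  assumes "alg_ideal X I" and "delta x \<in> (I :: ('x \<Rightarrow> 'k::field) set)"
  shows "x \<in> X"
  using alg_ideal_delta_mem(1)[OF assms, of x] by (simp add: delta_def)

lemma alg_ideal_mem_if_deltas_finite:
  assumes I: "alg_ideal X I" and "finite S" and "{x. f x \<noteq> 0} \<subseteq> S"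
    and deltas: "\<forall>x. f x \<noteq> 0 \<longrightarrow> delta x \<in> I"
  shows "f \<in> (I :: ('x \<Rightarrow> 'k::field) set)"
  using assms(2-)
proof (induction S arbitrary: f rule: finite_induct)
  case empty
  then have "f = (\<lambda>x. 0)" by auto
  then show ?case using alg_ideal_zero[OF I] by simp
next
  case (insert a S)
  have rest: "f(a := 0) \<in> I"
    using insert.prems by (intro insert.IH) auto
  show ?case
  proof (cases "f a = 0")
    case True
    then have "f = f(a := 0)" by auto
    with rest show ?thesis by simp
  next
    case False
    then have "(\<lambda>z. (f(a := 0)) z + f a * delta a z) \<in> I"
      using insert.prems by (intro alg_ideal_add[OF I rest] alg_ideal_smult[OF I]) auto
    moreover have "(\<lambda>z. (f(a := 0)) z + f a * delta a z) = f"
      by (auto simp: delta_def)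
    ultimately show ?thesis by simp
  qed
qed

lemma alg_ideal_eq_F0_of_deltas:
  assumes I: "alg_ideal X I"
  shows "I = {f \<in> F0 X. \<forall>x. x \<notin> {x \<in> X. (delta x :: 'x \<Rightarrow> 'k::field) \<in> I} \<longrightarrow> f x = 0}"
proof
  show "I \<subseteq> {f \<in> F0 X. \<forall>x. x \<notin> {x \<in> X. delta x \<in> I} \<longrightarrow> f x = 0}"
    using alg_ideal_subset_F0[OF I] alg_ideal_delta_mem[OF I] by blast
  show "{f \<in> F0 X. \<forall>x. x \<notin> {x \<in> X. delta x \<in> I} \<longrightarrow> f x = 0} \<subseteq> I"
  proof
    fix f :: "'x \<Rightarrow> 'k"
    assume f: "f \<in> {f \<in> F0 X. \<forall>x. x \<notin> {x \<in> X. delta x \<in> I} \<longrightarrow> f x = 0}"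
    then have "finite {x. f x \<noteq> 0}" unfolding F0_def by auto
    with f show "f \<in> I" by (intro alg_ideal_mem_if_deltas_finite[OF I]) auto
  qed
qed

lemma alg_iso_inj_on: "alg_iso \<phi> I J \<Longrightarrow> inj_on \<phi> I"
  by (simp add: alg_iso_def bij_betw_def)

lemma alg_iso_image: "alg_iso \<phi> I J \<Longrightarrow> \<phi> ` I = J"
  by (simp add: alg_iso_def bij_betw_def)

lemma alg_iso_mult:
  "alg_iso \<phi> I J \<Longrightarrow> f \<in> I \<Longrightarrow> g \<in> I \<Longrightarrow> \<phi> (\<lambda>x. f x * g x) = (\<lambda>x. \<phi> f x * \<phi> g x)"
  by (simp add: alg_iso_def)

lemma alg_iso_smult: "alg_iso \<phi> I J \<Longrightarrow> f \<in> I \<Longrightarrow> \<phi> (\<lambda>x. c * f x) = (\<lambda>x. c * \<phi> f x)"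
  by (simp add: alg_iso_def)

lemma alg_iso_zero:
  assumes "alg_iso \<phi> I J" and "(\<lambda>x. 0) \<in> I"
  shows "\<phi> (\<lambda>x. 0) = (\<lambda>x. 0 :: 'k::field)"
  using alg_iso_smult[OF assms, of 0] by simp

lemma idempotent_nonzero_eq_one: "(e::'k::field) = e * e \<Longrightarrow> e \<noteq> 0 \<Longrightarrow> e = 1"
  by (metis mult_cancel_left mult.right_neutral)

lemma alg_iso_delta:
  assumes I: "alg_ideal X I" and J: "alg_ideal X J" and \<phi>: "alg_iso \<phi> I J"
    and \<delta>x: "delta x \<in> I"
  shows "\<exists>y. delta y \<in> J \<and> \<phi> (delta x) = (delta y :: 'x \<Rightarrow> 'k::field)"
proof -
  define e where "e = \<phi> (delta x)"
  have "e \<noteq> (\<lambda>x. 0)"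
  proof
    assume "e = (\<lambda>x. 0)"
    then have "\<phi> (delta x) = \<phi> (\<lambda>x. 0)"
      using alg_iso_zero[OF \<phi> alg_ideal_zero[OF I]] e_def by simp
    then have "delta x = (\<lambda>x. 0 :: 'k)"
      using inj_onD[OF alg_iso_inj_on[OF \<phi>] _ \<delta>x alg_ideal_zero[OF I]] by blast
    then show False by (metis delta_def one_neq_zero)
  qed
  then obtain y where ey: "e y \<noteq> 0" by auto
  have "e = (\<lambda>z. e z * e z)"
    using alg_iso_mult[OF \<phi> \<delta>x \<delta>x] by (simp add: delta_idem e_def)
  then have ey1: "e y = 1" using ey idempotent_nonzero_eq_one by metis
  have "e \<in> J" using alg_iso_image[OF \<phi>] \<delta>x e_def by blast
  have \<delta>y: "delta y \<in> J" by (rule alg_ideal_delta_mem(2)[OF J \<open>e \<in> J\<close> ey])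
  then obtain g where g: "g \<in> I" "\<phi> g = delta y" using alg_iso_image[OF \<phi>] by force
  \<comment> \<open>The preimage \<open>g\<close> of \<open>\<delta>\<^sub>y\<close> is absorbed by \<open>\<delta>\<^sub>x\<close>, hence a multiple of \<open>\<delta>\<^sub>x\<close>.\<close>
  have xX: "x \<in> X" by (rule alg_ideal_delta_point_mem[OF I \<delta>x])
  have g\<delta>x: "(\<lambda>z. g z * delta x z) \<in> I" by (rule alg_ideal_mult[OF I delta_in_F0[OF xX] g(1)])
  have "\<phi> (\<lambda>z. g z * delta x z) = (\<lambda>z. delta y z * e z)"
    using alg_iso_mult[OF \<phi> g(1) \<delta>x] g(2) e_def by simp
  also have "\<dots> = \<phi> g" using ey1 g(2) by (auto simp: delta_def)
  finally have "(\<lambda>z. g z * delta x z) = g" by (rule inj_onD[OF alg_iso_inj_on[OF \<phi>] _ g\<delta>x g(1)])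
  then have "g = (\<lambda>z. g x * delta x z)" using mult_delta[of g x] by simp
  then have "delta y = (\<lambda>z. g x * e z)" using alg_iso_smult[OF \<phi> \<delta>x] g(2) e_def by metis
  moreover from this have "g x = 1" using ey1 fun_cong[of _ _ y] by (fastforce simp: delta_def)
  ultimately have "delta y = e" by simp
  with \<delta>y show ?thesis unfolding e_def by metis
qed

lemma alg_iso_apply_at_image_point:
  assumes \<phi>: "alg_iso \<phi> I J" and \<delta>x: "delta x \<in> I" and f: "f \<in> I"
    and \<phi>\<delta>x: "\<phi> (delta x) = delta y"
  shows "\<phi> f y = (f x :: 'k::field)"
proof -
  have "(\<lambda>z. \<phi> f z * delta y z) = \<phi> (\<lambda>z. f z * delta x z)"
    using alg_iso_mult[OF \<phi> f \<delta>x] \<phi>\<delta>x by simp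
  also have "\<dots> = (\<lambda>z. f x * delta y z)"
    using alg_iso_smult[OF \<phi> \<delta>x] \<phi>\<delta>x mult_delta[of f x] by simp
  finally show ?thesis by (metis delta_def mult.right_neutral)
qed

locale F0_partial_action = group G
  for G :: "('g, 'm) monoid_scheme" (structure) +
  fixes X :: "'x set" and D :: "'g \<Rightarrow> ('x \<Rightarrow> 'k::field) set"
    and \<alpha> :: "'g \<Rightarrow> ('x \<Rightarrow> 'k) \<Rightarrow> ('x \<Rightarrow> 'k)"
  assumes partial_action: "partial_action_alg G X D \<alpha>"
begin

lemma D_ideal: "t \<in> carrier G \<Longrightarrow> alg_ideal X (D t)"
  using partial_action by (simp add: partial_action_alg_def)

lemma \<alpha>_iso: "t \<in> carrier G \<Longrightarrow> alg_iso (\<alpha> t) (D (inv t)) (D t)"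
  using partial_action by (simp add: partial_action_alg_def)

lemma D_one: "D \<one> = F0 X"
  using partial_action by (simp add: partial_action_alg_def)

lemma \<alpha>_one: "f \<in> F0 X \<Longrightarrow> \<alpha> \<one> f = f"
  using partial_action by (simp add: partial_action_alg_def)

lemma \<alpha>_image:
  "t \<in> carrier G \<Longrightarrow> s \<in> carrier G \<Longrightarrow> \<alpha> t ` (D (inv t) \<inter> D s) = D t \<inter> D (t \<otimes> s)"
  using partial_action by (simp add: partial_action_alg_def)

lemma \<alpha>_comp:
  "t \<in> carrier G \<Longrightarrow> s \<in> carrier G \<Longrightarrow> f \<in> D (inv s) \<inter> D (inv s \<otimes> inv t) \<Longrightarrow>
    \<alpha> t (\<alpha> s f) = \<alpha> (t \<otimes> s) f"
  using partial_action by (simp add: partial_action_alg_def)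

lemma \<alpha>_inv_cancel:
  assumes t: "t \<in> carrier G" and f: "f \<in> D (inv t)"
  shows "\<alpha> (inv t) (\<alpha> t f) = f"
proof -
  have "f \<in> F0 X" using alg_ideal_subset_F0[OF D_ideal] f t by blast
  then have "f \<in> D (inv t) \<inter> D (inv t \<otimes> inv (inv t))" using f D_one t by simp
  then have "\<alpha> (inv t) (\<alpha> t f) = \<alpha> (inv t \<otimes> t) f" using \<alpha>_comp t by simp
  with \<open>f \<in> F0 X\<close> t show ?thesis by (simp add: \<alpha>_one)
qed

definition point_dom :: "'g \<Rightarrow> 'x set" where
  "point_dom t = {x \<in> X. delta x \<in> D t}"

definition point_map :: "'g \<Rightarrow> 'x \<Rightarrow> 'x" where
  "point_map t x = (SOME y. \<alpha> t (delta x) = delta y)"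

lemma D_eq_F0_point_dom:
  "t \<in> carrier G \<Longrightarrow> D t = {f \<in> F0 X. \<forall>x. x \<notin> point_dom t \<longrightarrow> f x = 0}"
  unfolding point_dom_def by (rule alg_ideal_eq_F0_of_deltas[OF D_ideal])

lemma point_dom_subset: "point_dom t \<subseteq> X"
  unfolding point_dom_def by blast

lemma delta_in_D_iff: "x \<in> X \<Longrightarrow> delta x \<in> D t \<longleftrightarrow> x \<in> point_dom t"
  unfolding point_dom_def by blast

lemma point_map_delta:
  assumes t: "t \<in> carrier G" and x: "x \<in> point_dom (inv t)"
  shows "point_map t x \<in> point_dom t" and "\<alpha> t (delta x) = delta (point_map t x)"
proof -
  have "delta x \<in> D (inv t)" using x unfolding point_dom_def by blast
  then obtain y where y: "delta y \<in> D t" "\<alpha> t (delta x) = delta y"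
    using alg_iso_delta[OF D_ideal D_ideal \<alpha>_iso] t by blast
  from y(2) show "\<alpha> t (delta x) = delta (point_map t x)"
    unfolding point_map_def by (rule someI)
  then have "point_map t x = y" using y(2) by (simp add: delta_inject)
  moreover have "y \<in> X" by (rule alg_ideal_delta_point_mem[OF D_ideal[OF t] y(1)])
  ultimately show "point_map t x \<in> point_dom t" using y(1) unfolding point_dom_def by blast
qed

lemma point_map_inv_cancel:
  assumes t: "t \<in> carrier G" and x: "x \<in> point_dom (inv t)"
  shows "point_map (inv t) (point_map t x) = x"
proof -
  have "point_map t x \<in> point_dom (inv (inv t))" using point_map_delta(1)[OF t x] t by simp
  then have "\<alpha> (inv t) (delta (point_map t x)) = delta (point_map (inv t) (point_map t x))"
    using point_map_delta(2) t by blast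
  moreover have "\<alpha> (inv t) (delta (point_map t x)) = delta x"
    using \<alpha>_inv_cancel[OF t] x point_map_delta(2)[OF t x] unfolding point_dom_def by force
  ultimately show ?thesis by (simp add: delta_inject)
qed

lemma point_map_inv_cancel':
  "t \<in> carrier G \<Longrightarrow> y \<in> point_dom t \<Longrightarrow> point_map t (point_map (inv t) y) = y"
  using point_map_inv_cancel[of "inv t" y] by simp

lemma point_map_inv_in_dom:
  "t \<in> carrier G \<Longrightarrow> y \<in> point_dom t \<Longrightarrow> point_map (inv t) y \<in> point_dom (inv t)"
  using point_map_delta(1)[of "inv t" y] by simp

lemma point_map_bij:
  assumes t: "t \<in> carrier G"
  shows "bij_betw (point_map t) (point_dom (inv t)) (point_dom t)"
proof (rule bij_betw_byWitness[where f'="point_map (inv t)"])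
  show "\<forall>x\<in>point_dom (inv t). point_map (inv t) (point_map t x) = x"
    using point_map_inv_cancel[OF t] by blast
  show "\<forall>y\<in>point_dom t. point_map t (point_map (inv t) y) = y"
    using point_map_inv_cancel'[OF t] by blast
  show "point_map t ` point_dom (inv t) \<subseteq> point_dom t"
    using point_map_delta(1)[OF t] by blast
  show "point_map (inv t) ` point_dom t \<subseteq> point_dom (inv t)"
    using point_map_inv_in_dom[OF t] by blast
qed

lemma point_dom_one: "point_dom \<one> = X"
  unfolding point_dom_def D_one by (auto intro: delta_in_F0)

lemma point_map_one:
  assumes x: "x \<in> X"
  shows "point_map \<one> x = x"
proof -
  have "x \<in> point_dom (inv \<one>)" using x by (simp add: point_dom_one)
  then have "delta (point_map \<one> x) = \<alpha> \<one> (delta x)" using point_map_delta(2) by simp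
  also have "\<dots> = delta x" using \<alpha>_one[OF delta_in_F0[OF x]] .
  finally show ?thesis by (simp add: delta_inject)
qed

lemma point_map_image:
  assumes t: "t \<in> carrier G" and s: "s \<in> carrier G"
  shows "point_map t ` (point_dom (inv t) \<inter> point_dom s) = point_dom t \<inter> point_dom (t \<otimes> s)"
proof (intro equalityI subsetI)
  fix y assume "y \<in> point_map t ` (point_dom (inv t) \<inter> point_dom s)"
  then obtain x where x: "x \<in> point_dom (inv t)" "x \<in> point_dom s" and y: "y = point_map t x"
    by blast
  have "delta x \<in> D (inv t) \<inter> D s" using x unfolding point_dom_def by blast
  then have "\<alpha> t (delta x) \<in> D t \<inter> D (t \<otimes> s)" using \<alpha>_image[OF t s] by blast
  moreover have "y \<in> X" using point_map_delta(1)[OF t x(1)] point_dom_subset y by blast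
  ultimately show "y \<in> point_dom t \<inter> point_dom (t \<otimes> s)"
    using point_map_delta(2)[OF t x(1)] y by (simp add: delta_in_D_iff)
next
  fix y assume y: "y \<in> point_dom t \<inter> point_dom (t \<otimes> s)"
  then have "y \<in> X" using point_dom_subset by blast
  with y have "delta y \<in> \<alpha> t ` (D (inv t) \<inter> D s)" using \<alpha>_image[OF t s] by (simp add: delta_in_D_iff)
  then obtain f where \<alpha>f: "delta y = \<alpha> t f" and f: "f \<in> D (inv t) \<inter> D s"
    by (rule imageE)
  define x where "x = point_map (inv t) y"
  have x: "x \<in> point_dom (inv t)" "point_map t x = y"
    using y t point_map_inv_in_dom point_map_inv_cancel' unfolding x_def by auto
  have \<delta>x: "delta x \<in> D (inv t)" using x(1) unfolding point_dom_def by blast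
  have "\<alpha> t f = \<alpha> t (delta x)" using point_map_delta(2)[OF t x(1)] x(2) \<alpha>f by simp
  then have "f = delta x" using inj_onD[OF alg_iso_inj_on[OF \<alpha>_iso[OF t]] _ _ \<delta>x] f by blast
  then have "x \<in> point_dom s" using f x(1) unfolding point_dom_def by blast
  with x show "y \<in> point_map t ` (point_dom (inv t) \<inter> point_dom s)" by blast
qed

lemma point_map_comp:
  assumes t: "t \<in> carrier G" and s: "s \<in> carrier G"
    and x: "x \<in> point_dom (inv s) \<inter> point_dom (inv s \<otimes> inv t)"
  shows "point_map t (point_map s x) = point_map (t \<otimes> s) x"
proof -
  have "point_map s x \<in> point_dom s \<inter> point_dom (s \<otimes> (inv s \<otimes> inv t))"
    using point_map_image[OF s, of "inv s \<otimes> inv t"] x t s by blast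
  then have sx: "point_map s x \<in> point_dom (inv t)"
    using t s by (simp add: m_assoc[symmetric])
  have "x \<in> point_dom (inv (t \<otimes> s))" using x t s by (simp add: inv_mult_group)
  then have "delta (point_map (t \<otimes> s) x) = \<alpha> (t \<otimes> s) (delta x)"
    using point_map_delta(2) t s by simp
  also have "\<dots> = \<alpha> t (\<alpha> s (delta x))"
    using \<alpha>_comp[OF t s] x unfolding point_dom_def by simp
  also have "\<dots> = delta (point_map t (point_map s x))"
    using point_map_delta(2)[OF s] point_map_delta(2)[OF t sx] x by simp
  finally show ?thesis by (simp add: delta_inject)
qed

lemma partial_action_set_point_map: "partial_action_set G X point_dom point_map"
  unfolding partial_action_set_def
  by (intro conjI ballI point_dom_subset point_map_bij point_dom_one point_map_one
      point_map_image point_map_comp)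

lemma \<alpha>_eq_comp_point_map:
  assumes t: "t \<in> carrier G" and f: "f \<in> D (inv t)"
  shows "\<alpha> t f = (\<lambda>y. if y \<in> point_dom t then f (point_map (inv t) y) else 0)"
proof
  fix y
  show "\<alpha> t f y = (if y \<in> point_dom t then f (point_map (inv t) y) else 0)"
  proof (cases "y \<in> point_dom t")
    case True
    define x where "x = point_map (inv t) y"
    have x: "x \<in> point_dom (inv t)" "point_map t x = y"
      using True t point_map_inv_in_dom point_map_inv_cancel' unfolding x_def by auto
    have "\<alpha> t f y = f x"
      using alg_iso_apply_at_image_point[OF \<alpha>_iso[OF t] _ f] point_map_delta(2)[OF t x(1)] x
      unfolding point_dom_def by blast
    with True show ?thesis unfolding x_def by simp
  next
    case False
    have "\<alpha> t f \<in> D t" using alg_iso_image[OF \<alpha>_iso[OF t]] f by blast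
    with False t show ?thesis by (simp add: D_eq_F0_point_dom)
  qed
qed

end

theorem mainTheorem9:
  fixes G :: "('g, 'm) monoid_scheme"
    and X :: "'x set"
    and D :: "'g \<Rightarrow> ('x \<Rightarrow> 'k::field) set"
    and \<alpha> :: "'g \<Rightarrow> ('x \<Rightarrow> 'k) \<Rightarrow> ('x \<Rightarrow> 'k)"
  assumes "group G"
    and "partial_action_alg G X D \<alpha>"
  shows "\<exists>Xs h. partial_action_set G X Xs h
     \<and> (\<forall>t\<in>carrier G. D t = {f \<in> F0 X. \<forall>x. x \<notin> Xs t \<longrightarrow> f x = 0})
     \<and> (\<forall>t\<in>carrier G. \<forall>f\<in>D (inv\<^bsub>G\<^esub> t).
          \<alpha> t f = (\<lambda>x. if x \<in> Xs t then f (h (inv\<^bsub>G\<^esub> t) x) else 0))"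
proof -
  interpret F0_partial_action G X D \<alpha>
    using assms unfolding F0_partial_action_def F0_partial_action_axioms_def by blast
  show ?thesis
    by (intro exI[of _ point_dom] exI[of _ point_map] conjI ballI partial_action_set_point_map
        D_eq_F0_point_dom \<alpha>_eq_comp_point_map)
qed

end
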